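(* There exist absolute constants $w_0>0$ and $c>0$ such that for every $w\ge w_0$ the following holds. Let $\tilde x:[0,1]\to\mathbb R$ solve the guided ODE $$\tilde x'(s)=(w+1)-w\tanh\bigl(s\,\tilde x(s)\bigr),\qquad \tilde x(0)=x,$$ with random initialization $x\sim\mathcal N(0,1)$. Then $$\Pr[\tilde x(1)\ge0]\ge1-e^{-cw^2}\qquad\text{and}\qquad \Pr\Bigl[\tilde x(1)\ge\frac{\sqrt{w+1}}{4}\Bigr]\ge1-e^{-cw}.$$
   Context: This ODE is the guided probability flow ODE with guidance parameter $w$, guided toward the component $z=+1$, for the Gaussian mixture $\frac12\mathcal N(1,1)+\frac12\mathcal N(-1,1)$ on $\mathbb R$: in the original time variable $t\in[0,T]$ with $a_t=e^{t-T}$, it reads $x'(t)=x(t)-(w+1)(x(t)-a_t)+w\bigl(x(t)-a_t\tanh(a_tx(t))\bigr)$ with $x(0)\sim\mathcal N(0,1)$; the displayed ODE is obtained via the change of variables $s=a_t$, $\tilde x(s)=x(T+\ln s)$ and letting $T\to\infty$, so that $s$ ranges over $[0,1]$ and $\tilde x(1)$ is the output sample. *)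

theory Defs
  imports "HOL-Probability.Probability"
begin

definition guided_sol :: "real \<Rightarrow> (real \<Rightarrow> real) \<Rightarrow> real \<Rightarrow> bool" where
  "guided_sol w y x \<longleftrightarrow> y 0 = x \<and>
     (\<forall>s\<in>{0..1}. (y has_real_derivative ((w + 1) - w * tanh (s * y s))) (at s within {0..1}))"

definition std_gaussian :: "real measure" where
  "std_gaussian = density lborel std_normal_density"

end

theory Submission
  imports Defs
begin

text \<open>The right-hand side \<open>(w + 1) - w tanh(s y)\<close> is at least 1 and decreasing in \<open>y\<close>, so
  solutions increase and stay ordered like their initial values. Hence the endpoint map
  \<open>x \<mapsto> y(1)\<close> is monotone, and it suffices to find \<open>t\<close> with \<open>x \<ge> -t \<Longrightarrow> y(1) \<ge> v\<close> and
  apply the Gaussian tail bound \<open>exp (-t\<^sup>2/8)\<close>. While \<open>y < 0\<close> the slope is at least \<open>w + 1\<close>,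
  giving \<open>t = w + 1\<close> for \<open>v = 0\<close>. While \<open>y < \<surd>(w + 1)/4\<close>, the argument \<open>s y(s)\<close> stays
  below 1/2 up to time \<open>2/\<surd>(w + 1)\<close>, where the slope is at least \<open>w/2\<close>; this gives
  \<open>t = \<surd>(w + 1)/4\<close> for \<open>v = \<surd>(w + 1)/4\<close>.\<close>

lemma DERIV_ge_imp_diff_ge:
  fixes f f' :: "real \<Rightarrow> real"
  assumes "a \<le> b" "continuous_on {a..b} f"
    and "\<And>x. a < x \<Longrightarrow> x < b \<Longrightarrow> (f has_real_derivative f' x) (at x)"
    and "\<And>x. a < x \<Longrightarrow> x < b \<Longrightarrow> k \<le> f' x"
  shows "k * (b - a) \<le> f b - f a"
proof -
  have "(\<lambda>x. f x - k * x) a \<le> (\<lambda>x. f x - k * x) b"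
  proof (rule DERIV_nonneg_imp_increasing_open[OF assms(1)])
    fix x assume "a < x" "x < b"
    then show "\<exists>y. ((\<lambda>x. f x - k * x) has_real_derivative y) (at x) \<and> 0 \<le> y"
      using assms(3,4) by (intro exI[of _ "f' x - k"]) (auto intro!: derivative_eq_intros)
  next
    show "continuous_on {a..b} (\<lambda>x. f x - k * x)"
      using assms(2) by (intro continuous_intros)
  qed
  then show ?thesis by (simp add: algebra_simps)
qed

lemma tanh_half_le: "tanh (1/2 :: real) \<le> 1/2"
proof -
  have "tanh (1/2 :: real) = (1 - exp (-1)) / (1 + exp (-1))"
    by (simp add: tanh_real_altdef)
  also have "\<dots> \<le> 1/2"
  proof -
    have "1/3 \<le> exp (-1 :: real)"
      using exp_le by (simp add: exp_minus field_simps)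
    then show ?thesis by (simp add: divide_simps)
  qed
  finally show ?thesis .
qed

context
  fixes w :: real and y :: "real \<Rightarrow> real" and x :: real
  assumes sol: "guided_sol w y x" and w_nonneg: "0 \<le> w"
begin

lemma guided_sol_initial: "y 0 = x"
  using sol unfolding guided_sol_def by simp

lemma guided_sol_continuous_on: "continuous_on {0..1} y"
  using sol unfolding guided_sol_def by (intro DERIV_continuous_on) auto

lemma guided_sol_has_derivative:
  assumes "0 < s" "s < 1"
  shows "(y has_real_derivative (w + 1) - w * tanh (s * y s)) (at s)"
proof -
  have "(y has_real_derivative (w + 1) - w * tanh (s * y s)) (at s within {0..1})"
    using sol assms unfolding guided_sol_def by simp
  then show ?thesis using at_within_Icc_at[of 0 s 1] assms by simp
qed

lemma guided_sol_increment_ge: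
  assumes "0 \<le> a" "a \<le> b" "b \<le> 1"
    and "\<And>s. a < s \<Longrightarrow> s < b \<Longrightarrow> k \<le> (w + 1) - w * tanh (s * y s)"
  shows "k * (b - a) \<le> y b - y a"
  using assms guided_sol_has_derivative
  by (intro DERIV_ge_imp_diff_ge[where f' = "\<lambda>s. (w + 1) - w * tanh (s * y s)"]
      continuous_on_subset[OF guided_sol_continuous_on]) auto

lemma guided_sol_mono:
  assumes "0 \<le> a" "a \<le> b" "b \<le> 1"
  shows "y a \<le> y b"
proof -
  have "w * tanh (s * y s) \<le> w + 1" for s
    using w_nonneg tanh_real_lt_1[of "s * y s"] mult_left_mono[of "tanh (s * y s)" 1 w] by simp
  then have "0 * (b - a) \<le> y b - y a"
    using assms by (intro guided_sol_increment_ge) auto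
  then show ?thesis by simp
qed

lemma guided_sol_endpoint_nonneg:
  assumes "- (w + 1) \<le> x"
  shows "0 \<le> y 1"
proof (rule ccontr)
  assume "\<not> 0 \<le> y 1"
  then have neg: "y s < 0" if "0 \<le> s" "s \<le> 1" for s
    using guided_sol_mono[OF that] by simp
  have "s * y s \<le> 0" if "0 < s" "s < 1" for s
    using that neg[of s] by (auto intro!: mult_nonneg_nonpos)
  then have "w * tanh (s * y s) \<le> 0" if "0 < s" "s < 1" for s
    using that w_nonneg by (simp add: mult_nonneg_nonpos)
  then have "(w + 1) * (1 - 0) \<le> y 1 - y 0"
    by (intro guided_sol_increment_ge) auto
  then show False
    using \<open>\<not> 0 \<le> y 1\<close> assms guided_sol_initial by simp
qed

lemma guided_sol_endpoint_ge_sqrt: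
  assumes "3 \<le> w" "- (sqrt (w + 1) / 4) \<le> x"
  shows "sqrt (w + 1) / 4 \<le> y 1"
proof (rule ccontr)
  define b where "b = sqrt (w + 1) / 4"
  define d where "d = 1 / (2 * b)"
  have b_ge: "1/2 \<le> b"
    unfolding b_def using assms(1) real_sqrt_le_mono[of 4 "w + 1"] by simp
  then have d: "0 \<le> d" "d \<le> 1" unfolding d_def by (auto simp: field_simps)
  assume "\<not> sqrt (w + 1) / 4 \<le> y 1"
  then have below: "y s < b" if "0 \<le> s" "s \<le> 1" for s
    using guided_sol_mono[OF that] b_def by simp
  have "w / 2 * (d - 0) \<le> y d - y 0"
  proof (rule guided_sol_increment_ge)
    fix s assume s: "0 < s" "s < d"
    have "s * y s \<le> s * b"
      using below[of s] s d by (intro mult_left_mono) auto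
    also have "\<dots> \<le> d * b"
      using s b_ge by (intro mult_right_mono) auto
    also have "\<dots> = 1/2" unfolding d_def using b_ge by simp
    finally have "tanh (s * y s) \<le> 1/2"
      using tanh_half_le by (meson order_trans tanh_real_le_iff)
    then show "w / 2 \<le> (w + 1) - w * tanh (s * y s)"
      using w_nonneg mult_left_mono[of "tanh (s * y s)" "1/2" w] by simp
  qed (use d in auto)
  then have "w / sqrt (w + 1) \<le> y d - x"
    using guided_sol_initial unfolding d_def b_def by simp
  moreover have "y d \<le> y 1" using guided_sol_mono d by simp
  moreover have "sqrt (w + 1) / 2 \<le> w / sqrt (w + 1)"
    using assms(1) by (simp add: field_simps)
  ultimately have "sqrt (w + 1) / 4 \<le> y 1"
    using assms(2) by linarith
  with \<open>\<not> sqrt (w + 1) / 4 \<le> y 1\<close> show False by simp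
qed

end

lemma guided_sol_endpoint_le:
  assumes sol1: "guided_sol w y1 x1" and sol2: "guided_sol w y2 x2"
    and w: "0 \<le> w" and "x1 \<le> x2"
  shows "y1 1 \<le> y2 1"
proof (rule ccontr)
  assume "\<not> y1 1 \<le> y2 1"
  define g where "g s = y2 s - y1 s" for s
  define K where "K = {0..1} \<inter> g -` {0..}"
  have g_cont: "continuous_on {0..1} g"
    unfolding g_def using guided_sol_continuous_on[OF sol1 w] guided_sol_continuous_on[OF sol2 w]
    by (intro continuous_intros)
  then have "closed K"
    unfolding K_def by (intro continuous_closed_preimage) auto
  then have "compact K"
    using compact_Int_closed[OF compact_Icc[of 0 1], of K] unfolding K_def by (simp add: Int_absorb1)
  moreover have "0 \<in> K"
    unfolding K_def g_def
    using assms guided_sol_initial[OF sol1 w] guided_sol_initial[OF sol2 w] by simp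
  \<comment> \<open>\<open>a\<close> is the last time with \<open>y1 \<le> y2\<close>; after it \<open>y2 < y1\<close>, which makes \<open>g\<close> increasing.\<close>
  ultimately obtain a where "a \<in> K" and a_last: "\<forall>s\<in>K. s \<le> a"
    using compact_attains_sup[of K] by auto
  then have a: "0 \<le> a" "a \<le> 1" "0 \<le> g a" unfolding K_def by auto
  have "g a \<le> g 1"
  proof (rule DERIV_nonneg_imp_increasing_open[OF a(2)])
    fix s assume s: "a < s" "s < 1"
    have "s \<notin> K"
      using a_last s by auto
    then have "y2 s < y1 s"
      using s a unfolding K_def g_def by auto
    then have "s * y2 s \<le> s * y1 s"
      using s a by (intro mult_left_mono) auto
    then have "w * tanh (s * y2 s) \<le> w * tanh (s * y1 s)"
      using w by (intro mult_left_mono) auto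
    then have "((w + 1) - w * tanh (s * y2 s)) - ((w + 1) - w * tanh (s * y1 s)) \<ge> 0"
      by linarith
    moreover have "(g has_real_derivative
        ((w + 1) - w * tanh (s * y2 s)) - ((w + 1) - w * tanh (s * y1 s))) (at s)"
      unfolding g_def using s a
      by (intro DERIV_diff guided_sol_has_derivative[OF sol2 w] guided_sol_has_derivative[OF sol1 w])
        auto
    ultimately show "\<exists>d. (g has_real_derivative d) (at s) \<and> 0 \<le> d"
      by blast
  qed (rule continuous_on_subset[OF g_cont], use a in auto)
  with \<open>0 \<le> g a\<close> \<open>\<not> y1 1 \<le> y2 1\<close> show False unfolding g_def by simp
qed

lemma space_std_gaussian [simp]: "space std_gaussian = UNIV"
  unfolding std_gaussian_def by simp

lemma sets_std_gaussian [measurable_cong, simp]: "sets std_gaussian = sets borel"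
  unfolding std_gaussian_def by simp

lemma prob_space_std_gaussian: "prob_space std_gaussian"
  unfolding std_gaussian_def by (rule prob_space_normal_density) simp

text \<open>On \<open>x < -t\<close> the density \<open>exp (-x\<^sup>2/2)\<close> is at most \<open>exp (-t\<^sup>2/4) exp (-x\<^sup>2/4)\<close>, which
  compares the tail with \<open>\<surd>2 exp (-t\<^sup>2/4)\<close> times the mass of \<open>N(0, 2)\<close>.\<close>
lemma std_gaussian_lower_tail_le:
  assumes t: "2 \<le> t"
  shows "measure std_gaussian {x. x < -t} \<le> exp (- t\<^sup>2 / 8)"
proof -
  define C where "C = sqrt 2 * exp (- t\<^sup>2 / 4)"
  define nd where "nd = normal_density 0 (sqrt 2)"
  have C_nonneg: "0 \<le> C" unfolding C_def by simp
  have density_le: "std_normal_density x \<le> C * nd x" if "x < -t" for x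
  proof -
    have "t\<^sup>2 \<le> (-x)\<^sup>2" using that t by (intro power_mono) auto
    then have "exp (- x\<^sup>2 / 2) \<le> exp (- t\<^sup>2 / 4) * exp (- x\<^sup>2 / 4)"
      unfolding exp_add[symmetric] by simp
    moreover have "sqrt (2 * pi * 2) = sqrt 2 * sqrt (2 * pi)"
      by (simp add: real_sqrt_mult[symmetric] mult.commute)
    ultimately show ?thesis
      unfolding C_def nd_def normal_density_def std_normal_density_def
      by (simp add: divide_right_mono)
  qed
  have "emeasure std_gaussian {x. x < -t}
      = (\<integral>\<^sup>+x. ennreal (std_normal_density x) * indicator {x. x < -t} x \<partial>lborel)"
    unfolding std_gaussian_def by (simp add: emeasure_density nn_integral_set_ennreal)
  also have "\<dots> \<le> (\<integral>\<^sup>+x. ennreal C * ennreal (nd x) \<partial>lborel)"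
    using density_le C_nonneg
    by (intro nn_integral_mono) (auto simp: indicator_def ennreal_mult[symmetric] nd_def)
  also have "\<dots> = ennreal C * (\<integral>\<^sup>+x. ennreal (nd x) \<partial>lborel)"
    by (rule nn_integral_cmult) (simp add: nd_def)
  also have "(\<integral>\<^sup>+x. ennreal (nd x) \<partial>lborel) = 1"
    unfolding nd_def by (subst nn_integral_eq_integral) auto
  finally have tail_le_C: "measure std_gaussian {x. x < -t} \<le> C"
    using prob_space.finite_measure[OF prob_space_std_gaussian] C_nonneg
    by (simp add: finite_measure.emeasure_eq_measure)
  have "sqrt 2 \<le> 3/2" by (rule real_le_lsqrt) (auto simp: power2_eq_square)
  also have "\<dots> \<le> 1 + t\<^sup>2 / 8"
    using t power_mono[of 2 t 2] by (simp add: power2_eq_square)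
  also have "\<dots> \<le> exp (t\<^sup>2 / 8)" by (rule exp_ge_add_one_self)
  finally have "C \<le> exp (t\<^sup>2 / 8) * exp (- t\<^sup>2 / 4)"
    unfolding C_def by (intro mult_right_mono) auto
  also have "\<dots> = exp (- t\<^sup>2 / 8)" unfolding exp_add[symmetric] by simp
  finally show ?thesis using tail_le_C by simp
qed

lemma std_gaussian_superset_ge:
  assumes "2 \<le> t" "S \<in> sets borel" "{x. -t \<le> x} \<subseteq> S"
  shows "1 - exp (- t\<^sup>2 / 8) \<le> measure std_gaussian S"
proof -
  interpret prob_space std_gaussian by (rule prob_space_std_gaussian)
  have "{x. -t \<le> x} = space std_gaussian - {x. x < -t}" by auto
  then have "prob {x. -t \<le> x} = 1 - prob {x. x < -t}"
    using prob_compl[of "{x. x < -t}"] by simp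
  also have "\<dots> \<ge> 1 - exp (- t\<^sup>2 / 8)"
    using std_gaussian_lower_tail_le[OF assms(1)] by simp
  finally show ?thesis
    using finite_measure_mono[OF assms(3)] assms(2) by simp
qed

lemma guided_sol_endpoint_prob_ge:
  assumes sol: "\<forall>x. guided_sol w (X x) x" and "0 \<le> w" and t: "2 \<le> t"
    and threshold: "\<And>x. -t \<le> x \<Longrightarrow> v \<le> X x 1"
  shows "1 - exp (- t\<^sup>2 / 8) \<le> measure std_gaussian {x. v \<le> X x 1}"
proof (rule std_gaussian_superset_ge[OF t])
  have "mono (\<lambda>x. X x 1)"
    unfolding mono_def using guided_sol_endpoint_le sol \<open>0 \<le> w\<close> by blast
  then have "(\<lambda>x. X x 1) \<in> borel_measurable borel"
    by (rule borel_measurable_mono)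
  then show "{x. v \<le> X x 1} \<in> sets borel" by measurable
qed (use threshold in auto)

theorem theorem4p1:
  shows "\<exists>w0 > 0. \<exists>c > 0. \<forall>w \<ge> w0. \<forall>X :: real \<Rightarrow> real \<Rightarrow> real.
           (\<forall>x. guided_sol w (X x) x) \<longrightarrow>
             measure std_gaussian {x. X x 1 \<ge> 0} \<ge> 1 - exp (- c * w\<^sup>2) \<and>
             measure std_gaussian {x. X x 1 \<ge> sqrt (w + 1) / 4} \<ge> 1 - exp (- c * w)"
proof (rule exI[of _ "63 :: real"], intro exI[of _ "1/128 :: real"] conjI allI impI)
  fix w :: real and X :: "real \<Rightarrow> real \<Rightarrow> real"
  assume w: "63 \<le> w" and sol: "\<forall>x. guided_sol w (X x) x"
  then have sol_x: "guided_sol w (X x) x" for x by blast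
  have "1 - exp (- (w + 1)\<^sup>2 / 8) \<le> measure std_gaussian {x. 0 \<le> X x 1}"
    using w guided_sol_endpoint_nonneg[OF sol_x]
    by (intro guided_sol_endpoint_prob_ge[OF sol]) auto
  moreover have "exp (- (w + 1)\<^sup>2 / 8) \<le> exp (- (1/128) * w\<^sup>2)"
  proof -
    have "w\<^sup>2 \<le> (w + 1)\<^sup>2" using w by (intro power_mono) auto
    then have "- (w + 1)\<^sup>2 / 8 \<le> - (1/128) * w\<^sup>2" using zero_le_power2[of w] by linarith
    then show ?thesis by simp
  qed
  ultimately show "1 - exp (- (1/128) * w\<^sup>2) \<le> measure std_gaussian {x. 0 \<le> X x 1}"
    by linarith
  have "2 \<le> sqrt (w + 1) / 4"
    using w real_sqrt_le_mono[of 64 "w + 1"] by simp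
  then have "1 - exp (- (sqrt (w + 1) / 4)\<^sup>2 / 8)
      \<le> measure std_gaussian {x. sqrt (w + 1) / 4 \<le> X x 1}"
    using w guided_sol_endpoint_ge_sqrt[OF sol_x]
    by (intro guided_sol_endpoint_prob_ge[OF sol]) auto
  moreover have "exp (- (sqrt (w + 1) / 4)\<^sup>2 / 8) \<le> exp (- (1/128) * w)"
    using w by (simp add: power_divide)
  ultimately show "1 - exp (- (1/128) * w) \<le> measure std_gaussian {x. sqrt (w + 1) / 4 \<le> X x 1}"
    by linarith
qed simp_all

end
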